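(* Consider smoothed MCA-$(p,q,r)$ with $m$ constraints over $n$ variables, where for every constraint $C_i$ and every assignment $v\in[r]^{p_i}$ the value $C_i(v)$ is drawn independently from a distribution with density $f_{i,v}:[0,1]\to[0,\phi]$. Then the expected maximum number of iterations of local search (over all initial assignments and all improving sequences) is $O(r^{2p(q+1)+2}nm^2\phi)$.
   Context: MCA-$(p,q,r)$ (Maximum Constraint Assignment): given variables $x_1,\dots,x_n$ and constraints $C_1,\dots,C_m$, each $C_i$ associated with $p_i\le p$ variables $x_{i_1},\dots,x_{i_{p_i}}$ and evaluated as a function $C_i:[r]^{p_i}\to[0,1]$ (given as a table of values), where each variable appears in at most $q$ constraints. Feasible solutions are assignments $a:\{x_1,\dots,x_n\}\to[r]$, with weight $\sum_{i=1}^mC_i(a(x_{i_1}),\dots,a(x_{i_{p_i}}))$ to be maximized. Neighbours of $a$ are obtained by changing the value of a single variable. A solution has no neighbour of strictly larger weight; local search repeatedly moves to a strictly better neighbour. *)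

theory Defs
  imports "HOL-Probability.Probability"
begin

text \<open>MCA-(p,q,r): variables are indexed by 0..<n, values [r] = 0..<r, constraints by 0..<m.
  The random constraint values are a function om on pairs (i, v), v a value tuple.\<close>

definition mca_structure :: "nat \<Rightarrow> nat \<Rightarrow> nat \<Rightarrow> nat \<Rightarrow> (nat \<Rightarrow> nat list) \<Rightarrow> bool" where
  "mca_structure n m p q vars \<longleftrightarrow>
     (\<forall>i<m. length (vars i) \<le> p \<and> distinct (vars i) \<and> set (vars i) \<subseteq> {0..<n}) \<and>
     (\<forall>j<n. card {i. i < m \<and> j \<in> set (vars i)} \<le> q)"

definition assignments :: "nat \<Rightarrow> nat \<Rightarrow> (nat \<Rightarrow> nat) set" where
  "assignments n r = ({0..<n} \<rightarrow>\<^sub>E {0..<r})"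

definition weight :: "nat \<Rightarrow> (nat \<Rightarrow> nat list) \<Rightarrow> (nat \<times> nat list \<Rightarrow> real) \<Rightarrow> (nat \<Rightarrow> nat) \<Rightarrow> real" where
  "weight m vars om a = (\<Sum>i<m. om (i, map a (vars i)))"

definition neighbour :: "nat \<Rightarrow> (nat \<Rightarrow> nat) \<Rightarrow> (nat \<Rightarrow> nat) \<Rightarrow> bool" where
  "neighbour n a b \<longleftrightarrow> a \<noteq> b \<and> (\<exists>j<n. \<forall>l. l \<noteq> j \<longrightarrow> a l = b l)"

text \<open>A run of local search: a nonempty sequence of assignments, each a strictly better
  neighbour of the previous one. Its number of iterations is length - 1.\<close>
definition improving_seq :: "nat \<Rightarrow> nat \<Rightarrow> nat \<Rightarrow> (nat \<Rightarrow> nat list) \<Rightarrow> (nat \<times> nat list \<Rightarrow> real)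
    \<Rightarrow> (nat \<Rightarrow> nat) list \<Rightarrow> bool" where
  "improving_seq n r m vars om as \<longleftrightarrow> as \<noteq> [] \<and> set as \<subseteq> assignments n r \<and>
     (\<forall>j. Suc j < length as \<longrightarrow> neighbour n (as ! j) (as ! Suc j) \<and>
          weight m vars om (as ! j) < weight m vars om (as ! Suc j))"

text \<open>Maximum number of iterations over all initial assignments and all improving sequences
  (this set is always bounded, since weights strictly increase along a run).\<close>
definition max_iterations :: "nat \<Rightarrow> nat \<Rightarrow> nat \<Rightarrow> (nat \<Rightarrow> nat list) \<Rightarrow> (nat \<times> nat list \<Rightarrow> real) \<Rightarrow> nat" where
  "max_iterations n r m vars om = Sup {length as - 1 | as. improving_seq n r m vars om as}"

definition value_index :: "nat \<Rightarrow> nat \<Rightarrow> (nat \<Rightarrow> nat list) \<Rightarrow> (nat \<times> nat list) set" where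
  "value_index m r vars = {(i, v). i < m \<and> length v = length (vars i) \<and> set v \<subseteq> {0..<r}}"

definition bounded_density :: "real \<Rightarrow> (real \<Rightarrow> real) \<Rightarrow> bool" where
  "bounded_density \<phi> g \<longleftrightarrow> g \<in> borel_measurable lborel \<and> (\<forall>x. 0 \<le> g x \<and> g x \<le> \<phi>) \<and>
     (\<forall>x. x \<notin> {0..1} \<longrightarrow> g x = 0) \<and> (\<integral>\<^sup>+ x. ennreal (g x) \<partial>lborel) = 1"

definition value_space :: "nat \<Rightarrow> nat \<Rightarrow> (nat \<Rightarrow> nat list) \<Rightarrow> (nat \<Rightarrow> nat list \<Rightarrow> real \<Rightarrow> real)
    \<Rightarrow> (nat \<times> nat list \<Rightarrow> real) measure" where
  "value_space m r vars f = (\<Pi>\<^sub>M iv \<in> value_index m r vars. density lborel (\<lambda>x. ennreal (f (fst iv) (snd iv) x)))"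

end

theory Submission
  imports Defs "HOL-Analysis.Harmonic_Numbers"
begin

text \<open>Every improving step changes a single variable j, and its gain is a local gain: a sum,
  over the at most q constraints containing j, of differences of two constraint values. It only
  depends on j, the new value and the old values of the at most p q variables sharing a
  constraint with j, so there are at most n r^(p q + 1) local gains. The weight lies in [0, m],
  so a run of t steps contains a step whose gain lies in (0, m/t]. Conditioning on the single
  constraint value that enters a local gain with coefficient one shows that a fixed local gain
  falls into (0, m/t] with probability at most \<phi> m / t. A run never revisits an assignment of
  the relevant variables, so it has at most r^(p m) steps, and summing the tail probabilities
  gives E T \<le> n r^(p q + 1) m \<phi> H(r^(p m)) \<le> n m^2 \<phi> r^(p (q + 1) + 1).\<close>

lemma le_Sup_nat_iff:
  assumes "finite (S :: nat set)" "0 < t"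
  shows "t \<le> Sup S \<longleftrightarrow> (\<exists>s\<in>S. t \<le> s)"
proof (cases "S = {}")
  case False
  then show ?thesis using assms by (simp add: cSup_eq_Max Max_ge_iff)
qed (use assms in simp)

lemma Sup_nat_le:
  assumes "\<And>s. s \<in> S \<Longrightarrow> s \<le> (N :: nat)"
  shows "Sup S \<le> N"
  using assms by (cases "S = {}") (auto intro: cSup_least)

definition relevant_vars :: "nat \<Rightarrow> (nat \<Rightarrow> nat list) \<Rightarrow> nat set" where
  "relevant_vars m vars = (\<Union>i<m. set (vars i))"

lemma finite_relevant_vars: "finite (relevant_vars m vars)"
  by (simp add: relevant_vars_def)

lemma weight_cong:
  assumes "\<And>l. l \<in> relevant_vars m vars \<Longrightarrow> a l = b l"
  shows "weight m vars om a = weight m vars om b"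
  unfolding weight_def
proof (rule sum.cong[OF refl])
  fix i assume "i \<in> {..<m}"
  then have "map a (vars i) = map b (vars i)"
    using assms by (auto simp: relevant_vars_def intro!: map_cong)
  then show "om (i, map a (vars i)) = om (i, map b (vars i))" by metis
qed

lemma improving_seq_weight_less:
  assumes "improving_seq n r m vars om as" "j < j'" "j' < length as"
  shows "weight m vars om (as ! j) < weight m vars om (as ! j')"
  using assms(2,3)
proof (induction j')
  case (Suc k)
  have "weight m vars om (as ! k) < weight m vars om (as ! Suc k)"
    using assms(1) Suc.prems unfolding improving_seq_def by blast
  then show ?case using Suc by (cases "j = k") auto
qed simp

lemma card_relevant_vars_le:
  assumes "mca_structure n m p q vars"
  shows "card (relevant_vars m vars) \<le> m * p"
proof -
  have "card (relevant_vars m vars) \<le> (\<Sum>i<m. card (set (vars i)))"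
    unfolding relevant_vars_def by (rule card_UN_le) simp
  also have "\<dots> \<le> (\<Sum>i<m. p)"
    using assms unfolding mca_structure_def by (intro sum_mono) (meson card_length le_trans lessThan_iff)
  finally show ?thesis by simp
qed

text \<open>Weights strictly increase along a run, and the weight only depends on the restriction
  of an assignment to the relevant variables; so a run never repeats such a restriction.\<close>
lemma length_improving_seq_le:
  assumes ms: "mca_structure n m p q vars" and imp: "improving_seq n r m vars om as" and r: "1 \<le> r"
  shows "length as \<le> r ^ (p * m)"
proof -
  let ?R = "relevant_vars m vars"
  let ?res = "\<lambda>a. restrict a ?R"
  have "inj_on ?res (set as)"
  proof (rule inj_onI)
    fix a b assume "a \<in> set as" "b \<in> set as" and eq: "?res a = ?res b"
    then obtain i j where ij: "i < length as" "j < length as" "a = as ! i" "b = as ! j"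
      by (metis in_set_conv_nth)
    have "weight m vars om a = weight m vars om b"
      by (rule weight_cong) (use eq in \<open>metis restrict_apply'\<close>)
    then have "\<not> i < j" "\<not> j < i" using improving_seq_weight_less[OF imp] ij by fastforce+
    then show "a = b" using ij by simp
  qed
  moreover have "distinct as"
  proof -
    have "i < j \<Longrightarrow> j < length as \<Longrightarrow> as ! i \<noteq> as ! j" for i j
      using improving_seq_weight_less[OF imp] by fastforce
    then show ?thesis by (metis distinct_conv_nth nat_neq_iff)
  qed
  moreover have "?res ` set as \<subseteq> ?R \<rightarrow>\<^sub>E {0..<r}"
    using imp ms unfolding improving_seq_def assignments_def mca_structure_def relevant_vars_def
    by fastforce
  ultimately have "length as \<le> card (?R \<rightarrow>\<^sub>E {0..<r})"
    by (metis card_image card_mono distinct_card finite_PiE finite_atLeastLessThan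
        finite_relevant_vars)
  also have "\<dots> = r ^ card ?R" by (simp add: card_PiE finite_relevant_vars)
  also have "\<dots> \<le> r ^ (p * m)"
    using card_relevant_vars_le[OF ms] r by (simp add: mult.commute power_increasing)
  finally show ?thesis .
qed

definition short_runs :: "nat \<Rightarrow> nat \<Rightarrow> nat \<Rightarrow> nat \<Rightarrow> (nat \<Rightarrow> nat) list set" where
  "short_runs n r p m = {as. set as \<subseteq> assignments n r \<and> length as \<le> r ^ (p * m)}"

lemma finite_short_runs: "finite (short_runs n r p m)"
  unfolding short_runs_def assignments_def by (intro finite_lists_length_le) (simp add: finite_PiE)

lemma max_iterations_le:
  assumes "mca_structure n m p q vars" "1 \<le> r"
  shows "max_iterations n r m vars om \<le> r ^ (p * m)"
  unfolding max_iterations_def using length_improving_seq_le[OF assms(1) _ assms(2)]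
  by (force intro: Sup_nat_le)

lemma le_max_iterations_iff:
  assumes ms: "mca_structure n m p q vars" and r: "1 \<le> r" and t: "1 \<le> t"
  shows "t \<le> max_iterations n r m vars om \<longleftrightarrow>
    (\<exists>as\<in>short_runs n r p m. improving_seq n r m vars om as \<and> t \<le> length as - 1)"
proof -
  let ?S = "{length as - 1 | as. improving_seq n r m vars om as}"
  have "?S \<subseteq> {..r ^ (p * m)}" using length_improving_seq_le[OF ms _ r] by fastforce
  then have "finite ?S" by (rule finite_subset) simp
  then have "t \<le> Sup ?S \<longleftrightarrow> (\<exists>as. improving_seq n r m vars om as \<and> t \<le> length as - 1)"
    using t by (subst le_Sup_nat_iff) auto
  moreover have "improving_seq n r m vars om as \<Longrightarrow> as \<in> short_runs n r p m" for as
    using length_improving_seq_le[OF ms _ r] unfolding short_runs_def improving_seq_def by blast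
  ultimately show ?thesis unfolding max_iterations_def by blast
qed

lemma max_iterations_eq_0I:
  assumes "\<And>a b. a \<in> assignments n r \<Longrightarrow> b \<in> assignments n r \<Longrightarrow> neighbour n a b \<Longrightarrow>
      weight m vars om a < weight m vars om b \<Longrightarrow> False"
  shows "max_iterations n r m vars om = 0"
proof -
  have "length as \<le> 1" if "improving_seq n r m vars om as" for as
    using that assms[of "as ! 0" "as ! 1"] unfolding improving_seq_def
    by (metis One_nat_def Suc_lessD not_le nth_mem subset_code(1))
  then have "max_iterations n r m vars om \<le> 0"
    unfolding max_iterations_def by (intro Sup_nat_le) fastforce
  then show ?thesis by simp
qed

lemma max_iterations_degenerate:
  assumes "m = 0 \<or> r = 0"
  shows "max_iterations n r m vars om = 0"
proof (rule max_iterations_eq_0I)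
  fix a b assume ab: "a \<in> assignments n r" "b \<in> assignments n r" "neighbour n a b"
    and less: "weight m vars om a < weight m vars om b"
  show False
  proof (cases "m = 0")
    case True then show False using less by (simp add: weight_def)
  next
    case False
    then have "r = 0" using assms by simp
    then have "a = b"
      using ab(1,2) unfolding assignments_def by (cases "n = 0") (auto simp: PiE_eq_empty_iff)
    then show False using ab(3) unfolding neighbour_def by simp
  qed
qed

definition constraints_of :: "nat \<Rightarrow> (nat \<Rightarrow> nat list) \<Rightarrow> nat \<Rightarrow> nat set" where
  "constraints_of m vars j = {i. i < m \<and> j \<in> set (vars i)}"

definition var_neighbourhood :: "nat \<Rightarrow> (nat \<Rightarrow> nat list) \<Rightarrow> nat \<Rightarrow> nat set" where
  "var_neighbourhood m vars j = (\<Union>i\<in>constraints_of m vars j. set (vars i))"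

text \<open>A key (j, a, y) stands for moving variable j to value y from any assignment that
  agrees with a on the neighbourhood of j.\<close>
definition local_gain :: "nat \<Rightarrow> (nat \<Rightarrow> nat list) \<Rightarrow> nat \<times> (nat \<Rightarrow> nat) \<times> nat
    \<Rightarrow> (nat \<times> nat list \<Rightarrow> real) \<Rightarrow> real" where
  "local_gain m vars \<kappa> om = (case \<kappa> of (j, a, y) \<Rightarrow>
     \<Sum>i\<in>constraints_of m vars j. om (i, map (a(j := y)) (vars i)) - om (i, map a (vars i)))"

definition gain_keys :: "nat \<Rightarrow> nat \<Rightarrow> nat \<Rightarrow> (nat \<Rightarrow> nat list)
    \<Rightarrow> (nat \<times> (nat \<Rightarrow> nat) \<times> nat) set" where
  "gain_keys n m r vars =
     (SIGMA j:{0..<n}. (\<lambda>a. restrict a (var_neighbourhood m vars j)) ` assignments n r \<times> {0..<r})"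

lemma finite_constraints_of: "finite (constraints_of m vars j)"
  unfolding constraints_of_def by simp

lemma finite_var_neighbourhood: "finite (var_neighbourhood m vars j)"
  unfolding var_neighbourhood_def using finite_constraints_of by auto

lemma finite_gain_keys: "finite (gain_keys n m r vars)"
  unfolding gain_keys_def assignments_def
  by (intro finite_SigmaI finite_cartesian_product finite_imageI) (auto simp: finite_PiE)

lemma weight_diff_eq_local_gain:
  assumes a: "a \<in> assignments n r" and b: "b \<in> assignments n r" and nb: "neighbour n a b"
  shows "\<exists>\<kappa>\<in>gain_keys n m r vars. weight m vars om b - weight m vars om a = local_gain m vars \<kappa> om"
proof -
  obtain j where j: "j < n" "\<And>l. l \<noteq> j \<Longrightarrow> a l = b l" using nb unfolding neighbour_def by blast
  let ?C = "constraints_of m vars j"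
  let ?a' = "restrict a (var_neighbourhood m vars j)"
  let ?d = "\<lambda>i. om (i, map b (vars i)) - om (i, map a (vars i))"
  have key: "(j, ?a', b j) \<in> gain_keys n m r vars"
    using a b j(1) unfolding gain_keys_def assignments_def by auto
  have "weight m vars om b - weight m vars om a = (\<Sum>i<m. ?d i)"
    unfolding weight_def by (simp add: sum_subtractf)
  also have "\<dots> = (\<Sum>i\<in>?C. ?d i)"
  proof (rule sum.mono_neutral_right)
    show "\<forall>i\<in>{..<m} - ?C. ?d i = 0"
    proof
      fix i assume "i \<in> {..<m} - ?C"
      then have "\<And>x. x \<in> set (vars i) \<Longrightarrow> b x = a x" using j(2) unfolding constraints_of_def by force
      then have "map b (vars i) = map a (vars i)" by (rule map_cong[OF refl])
      then show "?d i = 0" by (simp del: map_eq_conv)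
    qed
  qed (auto simp: constraints_of_def)
  also have "\<dots> = local_gain m vars (j, ?a', b j) om"
    unfolding local_gain_def
  proof (simp, rule sum.cong[OF refl])
    fix i assume "i \<in> ?C"
    then have s: "set (vars i) \<subseteq> var_neighbourhood m vars j" unfolding var_neighbourhood_def by auto
    have "map b (vars i) = map (?a'(j := b j)) (vars i)" "map a (vars i) = map ?a' (vars i)"
      using s j(2) by (auto intro!: map_cong)
    then show "?d i = om (i, map (?a'(j := b j)) (vars i)) - om (i, map ?a' (vars i))"
      by (simp only:)
  qed
  finally show ?thesis using key by blast
qed

lemma card_var_neighbourhood_le:
  assumes ms: "mca_structure n m p q vars" and j: "j < n"
  shows "card (var_neighbourhood m vars j) \<le> p * q"
proof -
  have "card (var_neighbourhood m vars j) \<le> (\<Sum>i\<in>constraints_of m vars j. card (set (vars i)))"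
    unfolding var_neighbourhood_def by (rule card_UN_le) (rule finite_constraints_of)
  also have "\<dots> \<le> (\<Sum>i\<in>constraints_of m vars j. p)"
  proof (rule sum_mono)
    fix i assume "i \<in> constraints_of m vars j"
    then have "length (vars i) \<le> p" using ms unfolding mca_structure_def constraints_of_def by auto
    then show "card (set (vars i)) \<le> p" using card_length le_trans by blast
  qed
  also have "\<dots> = card (constraints_of m vars j) * p" by simp
  also have "\<dots> \<le> q * p" using ms j unfolding mca_structure_def constraints_of_def by auto
  finally show ?thesis by (simp add: mult.commute)
qed

lemma card_gain_keys_le:
  assumes ms: "mca_structure n m p q vars" and r: "1 \<le> r"
  shows "card (gain_keys n m r vars) \<le> n * r ^ (p * q + 1)"
proof -
  let ?V = "\<lambda>j. (\<lambda>a. restrict a (var_neighbourhood m vars j)) ` assignments n r"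
  have V: "card (?V j \<times> {0..<r}) \<le> r ^ (p * q + 1)" if j: "j < n" for j
  proof -
    have "var_neighbourhood m vars j \<subseteq> {0..<n}"
      using ms unfolding var_neighbourhood_def constraints_of_def mca_structure_def by auto
    then have "?V j \<subseteq> var_neighbourhood m vars j \<rightarrow>\<^sub>E {0..<r}"
      unfolding assignments_def by auto
    then have "card (?V j) \<le> card (var_neighbourhood m vars j \<rightarrow>\<^sub>E {0..<r})"
      by (rule card_mono[rotated]) (simp add: finite_PiE finite_var_neighbourhood)
    also have "\<dots> = r ^ card (var_neighbourhood m vars j)"
      by (simp add: card_PiE finite_var_neighbourhood)
    also have "\<dots> \<le> r ^ (p * q)" using card_var_neighbourhood_le[OF ms j] r by (simp add: power_increasing)
    finally have "card (?V j) * r \<le> r ^ (p * q) * r" by simp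
    then show ?thesis by (simp add: card_cartesian_product)
  qed
  have fin: "finite (?V j \<times> {0..<r})" for j
    unfolding assignments_def by (simp add: finite_PiE)
  have "card (gain_keys n m r vars) = (\<Sum>j\<in>{0..<n}. card (?V j \<times> {0..<r}))"
    unfolding gain_keys_def by (rule card_SigmaI) (auto simp: fin)
  also have "\<dots> \<le> (\<Sum>j\<in>{0..<n}. r ^ (p * q + 1))" by (rule sum_mono) (use V in auto)
  finally show ?thesis by simp
qed

definition values_in_unit :: "nat \<Rightarrow> nat \<Rightarrow> (nat \<Rightarrow> nat list) \<Rightarrow> (nat \<times> nat list \<Rightarrow> real) \<Rightarrow> bool" where
  "values_in_unit m r vars om \<longleftrightarrow> (\<forall>k\<in>value_index m r vars. om k \<in> {0..1})"

lemma constraint_value_in_value_index: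
  assumes "mca_structure n m p q vars" "a \<in> assignments n r" "i < m"
  shows "(i, map a (vars i)) \<in> value_index m r vars"
  using assms unfolding mca_structure_def assignments_def value_index_def by auto

lemma weight_bounds:
  assumes ms: "mca_structure n m p q vars" and a: "a \<in> assignments n r"
    and unit: "values_in_unit m r vars om"
  shows "0 \<le> weight m vars om a" "weight m vars om a \<le> m"
proof -
  have b: "om (i, map a (vars i)) \<in> {0..1}" if "i < m" for i
    using unit constraint_value_in_value_index[OF ms a that] unfolding values_in_unit_def by blast
  show "0 \<le> weight m vars om a" unfolding weight_def by (rule sum_nonneg) (use b in auto)
  have "weight m vars om a \<le> (\<Sum>i<m. 1)" unfolding weight_def by (rule sum_mono) (use b in auto)
  then show "weight m vars om a \<le> m" by simp
qed

text \<open>The t steps of a run telescope to a total gain of at most m.\<close>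
lemma improving_seq_small_gain:
  assumes ms: "mca_structure n m p q vars" and unit: "values_in_unit m r vars om"
    and imp: "improving_seq n r m vars om as" and t: "1 \<le> t" "t \<le> length as - 1"
  shows "\<exists>\<kappa>\<in>gain_keys n m r vars. 0 < local_gain m vars \<kappa> om \<and> local_gain m vars \<kappa> om \<le> m / t"
proof (rule ccontr)
  assume no_small: "\<not> ?thesis"
  let ?w = "\<lambda>j. weight m vars om (as ! j)"
  define L where "L = length as - 1"
  have L: "t \<le> L" "L < length as" using t imp unfolding L_def improving_seq_def by auto
  have in_assignments: "as ! j \<in> assignments n r" if "j < length as" for j
    using imp that unfolding improving_seq_def by (meson nth_mem subsetD)
  have big_step: "m / t < ?w (Suc j) - ?w j" if j: "j < L" for j
  proof -
    have js: "j < length as" "Suc j < length as" using j unfolding L_def by auto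
    then have nb: "neighbour n (as ! j) (as ! Suc j)" and less: "?w j < ?w (Suc j)"
      using imp unfolding improving_seq_def by auto
    obtain \<kappa> where "\<kappa> \<in> gain_keys n m r vars" "?w (Suc j) - ?w j = local_gain m vars \<kappa> om"
      using weight_diff_eq_local_gain[OF in_assignments[OF js(1)] in_assignments[OF js(2)] nb] by blast
    then show ?thesis using no_small less by force
  qed
  have "real t * (m / t) \<le> L * (m / t)"
    using L by (intro mult_right_mono) auto
  also have "\<dots> = (\<Sum>j<L. m / t)" by simp
  also have "\<dots> < (\<Sum>j<L. ?w (Suc j) - ?w j)"
    by (rule sum_strict_mono) (use big_step L t in \<open>auto simp: lessThan_empty_iff\<close>)
  also have "\<dots> = ?w L - ?w 0" by (rule sum_lessThan_telescope)
  also have "\<dots> \<le> m" using weight_bounds[OF ms in_assignments unit] L by fastforce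
  finally have "real t * (m / t) < m" .
  moreover have "real t * (m / t) = m" using t by simp
  ultimately show False by linarith
qed

lemma prob_space_density_bounded:
  assumes "bounded_density \<phi> g"
  shows "prob_space (density lborel (\<lambda>x. ennreal (g x)))"
proof (rule prob_spaceI)
  have "g \<in> borel_measurable lborel" using assms unfolding bounded_density_def by auto
  then have "emeasure (density lborel (\<lambda>x. ennreal (g x))) UNIV = (\<integral>\<^sup>+ x. ennreal (g x) \<partial>lborel)"
    by (subst emeasure_density) auto
  then show "emeasure (density lborel (\<lambda>x. ennreal (g x))) (space (density lborel (\<lambda>x. ennreal (g x)))) = 1"
    using assms unfolding bounded_density_def by simp
qed

lemma bounded_density_nonneg: "bounded_density \<phi> g \<Longrightarrow> 0 \<le> \<phi>"
  unfolding bounded_density_def by (meson order_trans)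

lemma emeasure_density_bounded_le:
  assumes g: "bounded_density \<phi> g" and A: "A \<in> sets borel"
  shows "emeasure (density lborel (\<lambda>x. ennreal (g x))) A \<le> ennreal \<phi> * emeasure lborel A"
proof -
  have [measurable]: "g \<in> borel_measurable lborel" using g unfolding bounded_density_def by auto
  have "emeasure (density lborel (\<lambda>x. ennreal (g x))) A = (\<integral>\<^sup>+x. ennreal (g x) * indicator A x \<partial>lborel)"
    using A by (simp add: emeasure_density)
  also have "\<dots> \<le> (\<integral>\<^sup>+x. ennreal \<phi> * indicator A x \<partial>lborel)"
    using g unfolding bounded_density_def
    by (intro nn_integral_mono) (auto intro!: mult_right_mono ennreal_leI split: split_indicator)
  also have "\<dots> = ennreal \<phi> * emeasure lborel A"
    using A by (simp add: nn_integral_cmult)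
  finally show ?thesis .
qed

lemma emeasure_density_bounded_Ioc_le:
  assumes "bounded_density \<phi> g" "0 \<le> \<epsilon>"
  shows "emeasure (density lborel (\<lambda>x. ennreal (g x))) {a <.. a + \<epsilon>} \<le> ennreal (\<epsilon> * \<phi>)"
proof -
  have "0 \<le> \<phi>" using assms(1) by (rule bounded_density_nonneg)
  then show ?thesis
    using emeasure_density_bounded_le[OF assms(1), of "{a <.. a + \<epsilon>}"] assms(2)
    by (simp add: ennreal_mult' mult.commute)
qed

lemma emeasure_density_bounded_outside_unit:
  assumes "bounded_density \<phi> g"
  shows "emeasure (density lborel (\<lambda>x. ennreal (g x))) (- {0..1}) = 0"
proof -
  have [measurable]: "g \<in> borel_measurable lborel" using assms unfolding bounded_density_def by auto
  have zero: "ennreal (g x) * indicator (- {0..1}) x = 0" for x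
    using assms unfolding bounded_density_def by (auto split: split_indicator)
  have "emeasure (density lborel (\<lambda>x. ennreal (g x))) (- {0..1})
      = (\<integral>\<^sup>+x. ennreal (g x) * indicator (- {0..1}) x \<partial>lborel)"
    by (simp add: emeasure_density)
  also have "\<dots> = (\<integral>\<^sup>+(x::real). 0 \<partial>lborel)" by (simp only: zero)
  finally show ?thesis by simp
qed

lemma emeasure_PiM_le_sections:
  assumes P: "\<And>i. prob_space (M i)" and fin: "finite I" and k: "k \<in> I" and A: "A \<in> sets (PiM I M)"
    and sections: "\<And>x. x \<in> space (PiM (I - {k}) M) \<Longrightarrow>
      emeasure (M k) ((\<lambda>y. x(k := y)) -` A \<inter> space (M k)) \<le> B"
  shows "emeasure (PiM I M) A \<le> B"
proof -
  interpret product_sigma_finite M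
    unfolding product_sigma_finite_def using P prob_space_imp_sigma_finite by blast
  interpret P: prob_space "PiM (I - {k}) M" by (rule prob_space_PiM) (use P in auto)
  have I: "insert k (I - {k}) = I" using k by auto
  have section_eq: "(\<integral>\<^sup>+y. indicator A (x(k := y)) \<partial>M k)
      = emeasure (M k) ((\<lambda>y. x(k := y)) -` A \<inter> space (M k))"
    if x: "x \<in> space (PiM (I - {k}) M)" for x
  proof -
    have "(\<lambda>y. x(k := y)) \<in> measurable (M k) (PiM I M)"
      using measurable_component_update[OF x, of k] I by simp
    then have "(\<lambda>y. x(k := y)) -` A \<inter> space (M k) \<in> sets (M k)" using A by (rule measurable_sets)
    then have "emeasure (M k) ((\<lambda>y. x(k := y)) -` A \<inter> space (M k))
        = (\<integral>\<^sup>+y. indicator ((\<lambda>y. x(k := y)) -` A \<inter> space (M k)) y \<partial>M k)"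
      by simp
    also have "\<dots> = (\<integral>\<^sup>+y. indicator A (x(k := y)) \<partial>M k)"
      by (intro nn_integral_cong) (simp split: split_indicator)
    finally show ?thesis ..
  qed
  have "emeasure (PiM I M) A = (\<integral>\<^sup>+x. indicator A x \<partial>PiM I M)" using A by simp
  also have "\<dots> = (\<integral>\<^sup>+x. (\<integral>\<^sup>+y. indicator A (x(k := y)) \<partial>M k) \<partial>PiM (I - {k}) M)"
    using product_nn_integral_insert[of "I - {k}" k "indicator A"] I A fin by simp
  also have "\<dots> \<le> (\<integral>\<^sup>+x. B \<partial>PiM (I - {k}) M)"
    by (rule nn_integral_mono) (simp add: section_eq sections)
  also have "\<dots> = B" by (simp add: P.emeasure_space_1)
  finally show ?thesis .
qed

text \<open>The coordinates outside value_index carry a dummy probability measure, which makes the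
  family of factors a product of probability spaces.\<close>
definition value_distribution :: "nat \<Rightarrow> nat \<Rightarrow> (nat \<Rightarrow> nat list) \<Rightarrow> (nat \<Rightarrow> nat list \<Rightarrow> real \<Rightarrow> real)
    \<Rightarrow> nat \<times> nat list \<Rightarrow> real measure" where
  "value_distribution m r vars f k =
     (if k \<in> value_index m r vars then density lborel (\<lambda>x. ennreal (f (fst k) (snd k) x))
      else return lborel 0)"

lemma value_space_eq_PiM:
  "value_space m r vars f = PiM (value_index m r vars) (value_distribution m r vars f)"
  unfolding value_space_def value_distribution_def by (rule PiM_cong) auto

lemma finite_value_index: "finite (value_index m r vars)"
proof (rule finite_subset)
  show "value_index m r vars \<subseteq> (SIGMA i:{..<m}. {v. set v \<subseteq> {0..<r} \<and> length v = length (vars i)})"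
    unfolding value_index_def by auto
qed (intro finite_SigmaI finite_lists_length_eq; simp)

lemma prob_space_value_distribution:
  assumes "\<forall>(i, v) \<in> value_index m r vars. bounded_density \<phi> (f i v)"
  shows "prob_space (value_distribution m r vars f k)"
  using assms prob_space_density_bounded unfolding value_distribution_def
  by (auto intro: prob_space_return)

lemma measurable_value_component:
  assumes "k \<in> value_index m r vars"
  shows "(\<lambda>om. om k) \<in> borel_measurable (value_space m r vars f)"
proof -
  have "sets (value_distribution m r vars f k) = sets borel" unfolding value_distribution_def by auto
  then show ?thesis unfolding value_space_eq_PiM
    using measurable_component_singleton[OF assms] measurable_cong_sets by blast
qed

lemma fun_upd_in_space_PiM:
  assumes "k \<in> I" "x \<in> space (PiM (I - {k}) M)" "z \<in> space (M k)"
  shows "x(k := z) \<in> space (PiM I M)"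
  using PiE_fun_upd[OF assms(3) assms(2)[unfolded space_PiM]] assms(1)
  by (simp add: space_PiM insert_absorb)

lemma local_gain_value_index:
  assumes ms: "mca_structure n m p q vars" and \<kappa>: "(j, a, y) \<in> gain_keys n m r vars"
    and i: "i \<in> constraints_of m vars j"
  shows "(i, map a (vars i)) \<in> value_index m r vars"
    and "(i, map (a(j := y)) (vars i)) \<in> value_index m r vars"
proof -
  obtain b where b: "a = restrict b (var_neighbourhood m vars j)" "j < n" "b \<in> assignments n r" "y < r"
    using \<kappa> unfolding gain_keys_def by auto
  have in_nb: "set (vars i) \<subseteq> var_neighbourhood m vars j"
    using i unfolding var_neighbourhood_def by auto
  have "i < m" "set (vars i) \<subseteq> {0..<n}"
    using i ms unfolding constraints_of_def mca_structure_def by auto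
  then have "b l < r" if "l \<in> set (vars i)" for l
    using b(3) that unfolding assignments_def by auto
  then show "(i, map a (vars i)) \<in> value_index m r vars"
    "(i, map (a(j := y)) (vars i)) \<in> value_index m r vars"
    unfolding value_index_def using b \<open>i < m\<close> in_nb by auto
qed

lemma measurable_local_gain:
  assumes ms: "mca_structure n m p q vars" and \<kappa>: "\<kappa> \<in> gain_keys n m r vars"
  shows "local_gain m vars \<kappa> \<in> borel_measurable (value_space m r vars f)"
proof -
  obtain j a y where "\<kappa> = (j, a, y)" by (metis prod.exhaust)
  then show ?thesis
    using \<kappa> unfolding local_gain_def
    by (auto intro!: borel_measurable_sum borel_measurable_diff measurable_value_component
        local_gain_value_index[OF ms])
qed

text \<open>Once y differs from a j, the value of constraint i0 after the move enters the local gain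
  with coefficient one, and no other term of the gain depends on it.\<close>
lemma local_gain_fun_upd:
  assumes i0: "i0 \<in> constraints_of m vars j" and y: "y \<noteq> a j"
  defines "k0 \<equiv> (i0, map (a(j := y)) (vars i0))"
  shows "local_gain m vars (j, a, y) (om(k0 := z)) = z + (local_gain m vars (j, a, y) om - om k0)"
proof -
  let ?t = "\<lambda>w i. w (i, map (a(j := y)) (vars i)) - w (i, map a (vars i))"
  let ?C = "constraints_of m vars j"
  have "j \<in> set (vars i0)" using i0 unfolding constraints_of_def by auto
  then have "map a (vars i0) \<noteq> map (a(j := y)) (vars i0)" using y by (auto simp: map_eq_conv)
  then have ne: "(i0, map a (vars i0)) \<noteq> k0" unfolding k0_def by simp
  have "?t (om(k0 := z)) i0 = (om(k0 := z)) k0 - (om(k0 := z)) (i0, map a (vars i0))"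
    by (simp only: k0_def)
  then have t0: "?t (om(k0 := z)) i0 = z - om (i0, map a (vars i0))"
    using ne by simp
  have rest: "(\<Sum>i\<in>?C - {i0}. ?t (om(k0 := z)) i) = (\<Sum>i\<in>?C - {i0}. ?t om i)"
    unfolding k0_def by (rule sum.cong) auto
  have split: "local_gain m vars (j, a, y) w = ?t w i0 + (\<Sum>i\<in>?C - {i0}. ?t w i)" for w
    unfolding local_gain_def by (simp add: sum.remove[OF finite_constraints_of i0])
  show ?thesis unfolding split t0 rest by (simp add: k0_def)
qed

lemma emeasure_small_local_gain_le:
  fixes \<epsilon> :: real
  assumes ms: "mca_structure n m p q vars"
    and hb: "\<forall>(i, v) \<in> value_index m r vars. bounded_density \<phi> (f i v)"
    and \<kappa>: "\<kappa> \<in> gain_keys n m r vars" and eps: "0 \<le> \<epsilon>"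
  shows "emeasure (value_space m r vars f)
      {om \<in> space (value_space m r vars f). 0 < local_gain m vars \<kappa> om \<and> local_gain m vars \<kappa> om \<le> \<epsilon>}
    \<le> ennreal (\<epsilon> * \<phi>)"
proof -
  let ?I = "value_index m r vars"
  let ?M = "value_distribution m r vars f"
  let ?P = "value_space m r vars f"
  let ?A = "{om \<in> space ?P. 0 < local_gain m vars \<kappa> om \<and> local_gain m vars \<kappa> om \<le> \<epsilon>}"
  have [measurable]: "local_gain m vars \<kappa> \<in> borel_measurable ?P"
    by (rule measurable_local_gain[OF ms \<kappa>])
  obtain j a y where \<kappa>_eq: "\<kappa> = (j, a, y)" by (metis prod.exhaust)
  show ?thesis
  proof (cases "constraints_of m vars j = {} \<or> y = a j")
    case True
    then have "local_gain m vars \<kappa> om = 0" for om unfolding local_gain_def \<kappa>_eq by auto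
    then show ?thesis by simp
  next
    case False
    then obtain i0 where i0: "i0 \<in> constraints_of m vars j" and y: "y \<noteq> a j" by auto
    define k0 where "k0 = (i0, map (a(j := y)) (vars i0))"
    have k0: "k0 \<in> ?I" using local_gain_value_index(2)[OF ms \<kappa>[unfolded \<kappa>_eq] i0] by (simp add: k0_def)
    then have density: "bounded_density \<phi> (f (fst k0) (snd k0))"
      and factor: "?M k0 = density lborel (\<lambda>x. ennreal (f (fst k0) (snd k0) x))"
      using hb unfolding value_distribution_def by auto
    have "emeasure (PiM ?I ?M) ?A \<le> ennreal (\<epsilon> * \<phi>)"
    proof (rule emeasure_PiM_le_sections[OF prob_space_value_distribution[OF hb] finite_value_index k0])
      show "?A \<in> sets (PiM ?I ?M)" unfolding value_space_eq_PiM[symmetric] by measurable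
      fix x assume x: "x \<in> space (PiM (?I - {k0}) ?M)"
      define c where "c = local_gain m vars \<kappa> x - x k0"
      have space: "x(k0 := z) \<in> space ?P" for z
        unfolding value_space_eq_PiM by (rule fun_upd_in_space_PiM[OF k0 x]) (simp add: factor)
      have gain: "local_gain m vars \<kappa> (x(k0 := z)) = z + c" for z
        unfolding \<kappa>_eq c_def k0_def by (rule local_gain_fun_upd[where a = a and y = y, OF i0 y])
      have "(\<lambda>z. x(k0 := z)) -` ?A \<inter> space (?M k0) = {- c <.. - c + \<epsilon>}"
        by (auto simp: space gain factor)
      then show "emeasure (?M k0) ((\<lambda>z. x(k0 := z)) -` ?A \<inter> space (?M k0)) \<le> ennreal (\<epsilon> * \<phi>)"
        unfolding factor using emeasure_density_bounded_Ioc_le[OF density eps, of "- c"] by simp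
    qed
    then show ?thesis by (simp only: value_space_eq_PiM)
  qed
qed

lemma emeasure_not_values_in_unit:
  assumes hb: "\<forall>(i, v) \<in> value_index m r vars. bounded_density \<phi> (f i v)"
  shows "emeasure (value_space m r vars f)
    {om \<in> space (value_space m r vars f). \<not> values_in_unit m r vars om} = 0"
proof -
  let ?I = "value_index m r vars"
  let ?M = "value_distribution m r vars f"
  let ?P = "value_space m r vars f"
  let ?B = "\<lambda>k. {om \<in> space ?P. om k \<notin> {0..1}}"
  have B: "?B k \<in> sets ?P" if k: "k \<in> ?I" for k
  proof -
    have [measurable]: "(\<lambda>om. om k) \<in> borel_measurable ?P" by (rule measurable_value_component[OF k])
    show ?thesis by measurable
  qed
  have B0: "emeasure (PiM ?I ?M) (?B k) \<le> 0" if k: "k \<in> ?I" for k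
  proof (rule emeasure_PiM_le_sections[OF prob_space_value_distribution[OF hb] finite_value_index k])
    show "?B k \<in> sets (PiM ?I ?M)" using B[OF k] by (simp only: value_space_eq_PiM)
    have density: "bounded_density \<phi> (f (fst k) (snd k))"
      and factor: "?M k = density lborel (\<lambda>x. ennreal (f (fst k) (snd k) x))"
      using hb k unfolding value_distribution_def by auto
    fix x assume x: "x \<in> space (PiM (?I - {k}) ?M)"
    have "x(k := z) \<in> space ?P" for z
      unfolding value_space_eq_PiM by (rule fun_upd_in_space_PiM[OF k x]) (simp add: factor)
    then have "(\<lambda>z. x(k := z)) -` ?B k \<inter> space (?M k) = - {0..1}"
      by (auto simp: factor)
    then show "emeasure (?M k) ((\<lambda>z. x(k := z)) -` ?B k \<inter> space (?M k)) \<le> 0"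
      unfolding factor using emeasure_density_bounded_outside_unit[OF density] by simp
  qed
  have "{om \<in> space ?P. \<not> values_in_unit m r vars om} = (\<Union>k\<in>?I. ?B k)"
    unfolding values_in_unit_def by auto
  also have "emeasure ?P \<dots> \<le> (\<Sum>k\<in>?I. emeasure ?P (?B k))"
    by (rule emeasure_subadditive_finite) (use B finite_value_index in auto)
  also have "\<dots> \<le> 0" using B0 by (simp add: sum_nonpos value_space_eq_PiM)
  finally show ?thesis by simp
qed

lemma measurable_weight:
  assumes "mca_structure n m p q vars" "a \<in> assignments n r"
  shows "(\<lambda>om. weight m vars om a) \<in> borel_measurable (value_space m r vars f)"
  unfolding weight_def
  by (intro borel_measurable_sum measurable_value_component constraint_value_in_value_index[OF assms]) simp

lemma sets_improving_seq:
  assumes ms: "mca_structure n m p q vars" and as: "set as \<subseteq> assignments n r"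
  shows "{om \<in> space (value_space m r vars f). improving_seq n r m vars om as} \<in> sets (value_space m r vars f)"
proof -
  let ?P = "value_space m r vars f"
  let ?L = "length as - 1"
  let ?steps = "as \<noteq> [] \<and> (\<forall>j<?L. neighbour n (as ! j) (as ! Suc j))"
  have in_assignments: "as ! j \<in> assignments n r" if "j < length as" for j
    using as that by (meson nth_mem subsetD)
  have iff: "improving_seq n r m vars om as \<longleftrightarrow>
      ?steps \<and> (\<forall>j\<in>{..<?L}. weight m vars om (as ! j) < weight m vars om (as ! Suc j))" for om
    using as unfolding improving_seq_def by (auto simp: less_diff_conv)
  have "{om \<in> space ?P. \<forall>j\<in>{..<?L}. weight m vars om (as ! j) < weight m vars om (as ! Suc j)} \<in> sets ?P"
  proof (rule sets.sets_Collect_finite_All)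
    fix j assume "j \<in> {..<?L}"
    then have "j < length as" "Suc j < length as" by auto
    then show "{om \<in> space ?P. weight m vars om (as ! j) < weight m vars om (as ! Suc j)} \<in> sets ?P"
      by (intro borel_measurable_less measurable_weight[OF ms] in_assignments)
  qed simp
  then show ?thesis unfolding iff by (cases ?steps) simp_all
qed

lemma sets_le_max_iterations:
  assumes ms: "mca_structure n m p q vars" and r: "1 \<le> r" and t: "1 \<le> t"
  shows "{om \<in> space (value_space m r vars f). t \<le> max_iterations n r m vars om} \<in> sets (value_space m r vars f)"
proof -
  let ?runs = "short_runs n r p m \<inter> {as. t \<le> length as - 1}"
  have "{om \<in> space (value_space m r vars f). t \<le> max_iterations n r m vars om}
      = {om \<in> space (value_space m r vars f). \<exists>as\<in>?runs. improving_seq n r m vars om as}"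
    using le_max_iterations_iff[OF ms r t] by auto
  also have "\<dots> \<in> sets (value_space m r vars f)"
    using finite_short_runs sets_improving_seq[OF ms]
    by (intro sets.sets_Collect_finite_Ex) (auto simp: short_runs_def)
  finally show ?thesis .
qed

lemma emeasure_le_max_iterations_le:
  assumes ms: "mca_structure n m p q vars"
    and hb: "\<forall>(i, v) \<in> value_index m r vars. bounded_density \<phi> (f i v)"
    and r: "1 \<le> r" and t: "1 \<le> t" and \<phi>: "0 \<le> \<phi>"
  shows "emeasure (value_space m r vars f) {om \<in> space (value_space m r vars f). t \<le> max_iterations n r m vars om}
    \<le> ennreal (card (gain_keys n m r vars) * (m / t * \<phi>))"
proof -
  let ?P = "value_space m r vars f"
  let ?K = "gain_keys n m r vars"
  let ?Bad = "{om \<in> space ?P. \<not> values_in_unit m r vars om}"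
  let ?Ev = "\<lambda>\<kappa>. {om \<in> space ?P. 0 < local_gain m vars \<kappa> om \<and> local_gain m vars \<kappa> om \<le> m / t}"
  have Bad: "?Bad \<in> sets ?P"
  proof -
    have "?Bad = (\<Union>k\<in>value_index m r vars. {om \<in> space ?P. om k \<notin> {0..1}})"
      unfolding values_in_unit_def by auto
    also have "\<dots> \<in> sets ?P"
    proof (intro sets.finite_UN finite_value_index)
      fix k assume k: "k \<in> value_index m r vars"
      have [measurable]: "(\<lambda>om. om k) \<in> borel_measurable ?P" by (rule measurable_value_component[OF k])
      show "{om \<in> space ?P. om k \<notin> {0..1}} \<in> sets ?P" by measurable
    qed
    finally show ?thesis .
  qed
  have Ev: "?Ev \<kappa> \<in> sets ?P" if \<kappa>: "\<kappa> \<in> ?K" for \<kappa>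
  proof -
    have [measurable]: "local_gain m vars \<kappa> \<in> borel_measurable ?P" by (rule measurable_local_gain[OF ms \<kappa>])
    show ?thesis by measurable
  qed
  have "{om \<in> space ?P. t \<le> max_iterations n r m vars om} \<subseteq> ?Bad \<union> (\<Union>\<kappa>\<in>?K. ?Ev \<kappa>)"
  proof
    fix om assume om: "om \<in> {om \<in> space ?P. t \<le> max_iterations n r m vars om}"
    show "om \<in> ?Bad \<union> (\<Union>\<kappa>\<in>?K. ?Ev \<kappa>)"
    proof (cases "values_in_unit m r vars om")
      case True
      obtain as where "improving_seq n r m vars om as" "t \<le> length as - 1"
        using om le_max_iterations_iff[OF ms r t] by auto
      then show ?thesis using improving_seq_small_gain[OF ms True _ t] om by fastforce
    qed (use om in auto)
  qed
  moreover have Evs: "(\<Union>\<kappa>\<in>?K. ?Ev \<kappa>) \<in> sets ?P"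
    using Ev finite_gain_keys by (intro sets.finite_UN) auto
  ultimately have "emeasure ?P {om \<in> space ?P. t \<le> max_iterations n r m vars om}
      \<le> emeasure ?P (?Bad \<union> (\<Union>\<kappa>\<in>?K. ?Ev \<kappa>))"
    using Bad by (intro emeasure_mono) auto
  also have "\<dots> \<le> emeasure ?P ?Bad + emeasure ?P (\<Union>\<kappa>\<in>?K. ?Ev \<kappa>)"
    using Bad Evs by (rule emeasure_subadditive)
  also have "\<dots> \<le> emeasure ?P ?Bad + (\<Sum>\<kappa>\<in>?K. emeasure ?P (?Ev \<kappa>))"
    using Ev finite_gain_keys by (intro add_left_mono emeasure_subadditive_finite) auto
  also have "\<dots> \<le> 0 + (\<Sum>\<kappa>\<in>?K. ennreal (m / t * \<phi>))"
  proof (intro add_mono sum_mono)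
    show "emeasure ?P ?Bad \<le> 0" using emeasure_not_values_in_unit[OF hb] by simp
    fix \<kappa> assume "\<kappa> \<in> ?K"
    then show "emeasure ?P (?Ev \<kappa>) \<le> ennreal (m / t * \<phi>)"
      by (rule emeasure_small_local_gain_le[OF ms hb]) simp
  qed
  also have "\<dots> = ennreal (card ?K * (m / t * \<phi>))"
    using \<phi> by (simp add: ennreal_of_nat_eq_real_of_nat ennreal_mult'[symmetric])
  finally show ?thesis .
qed

lemma nn_integral_nat_eq_sum_tails:
  fixes T :: "'a \<Rightarrow> nat"
  assumes bound: "\<And>x. x \<in> space M \<Longrightarrow> T x \<le> N"
    and tails: "\<And>t. 1 \<le> t \<Longrightarrow> {x \<in> space M. t \<le> T x} \<in> sets M"
  shows "(\<lambda>x. real (T x)) \<in> borel_measurable M"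
    and "(\<integral>\<^sup>+x. ennreal (real (T x)) \<partial>M) = (\<Sum>t=1..N. emeasure M {x \<in> space M. t \<le> T x})"
proof -
  let ?E = "\<lambda>t. {x \<in> space M. t \<le> T x}"
  have sum_eq: "real (T x) = (\<Sum>t=1..N. indicator (?E t) x)" if x: "x \<in> space M" for x
  proof -
    have "(\<Sum>t=1..N. indicator (?E t) x) = (\<Sum>t\<in>{1..N}. if t \<in> {..T x} then 1 else (0::real))"
      by (rule sum.cong) (auto simp: x indicator_def)
    also have "\<dots> = (\<Sum>t\<in>{1..N} \<inter> {..T x}. 1)" by (rule sum.inter_restrict[symmetric]) simp
    also have "{1..N} \<inter> {..T x} = {1..T x}" using bound[OF x] by auto
    finally show ?thesis by simp
  qed
  have [measurable]: "?E t \<in> sets M" if "t \<in> {1..N}" for t using that tails by simp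
  show "(\<lambda>x. real (T x)) \<in> borel_measurable M"
    by (subst measurable_cong[OF sum_eq]) auto
  have "(\<integral>\<^sup>+x. ennreal (real (T x)) \<partial>M) = (\<integral>\<^sup>+x. (\<Sum>t=1..N. indicator (?E t) x) \<partial>M)"
    by (intro nn_integral_cong) (simp add: sum_eq sum_ennreal[symmetric] ennreal_indicator del: sum_ennreal)
  also have "\<dots> = (\<Sum>t=1..N. emeasure M (?E t))"
    by (subst nn_integral_sum) auto
  finally show "(\<integral>\<^sup>+x. ennreal (real (T x)) \<partial>M) = (\<Sum>t=1..N. emeasure M (?E t))" .
qed

lemma harm_le_one_plus_ln: "1 \<le> n \<Longrightarrow> harm n \<le> 1 + ln (real n)"
  using euler_mascheroni_sequence_decreasing[of 1 n] by (simp add: harm_def)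

lemma harm_power_le:
  assumes r: "1 \<le> r" and m: "1 \<le> m"
  shows "harm (r ^ (p * m)) \<le> real m * real r ^ p"
proof -
  have "harm (r ^ (p * m)) \<le> 1 + ln (real (r ^ (p * m)))"
    using r by (intro harm_le_one_plus_ln) simp
  also have "ln (real (r ^ (p * m))) = real m * (real p * ln (real r))"
    using r by (simp add: ln_realpow)
  also have "real p * ln (real r) \<le> real p * (real r - 1)"
    using r by (intro mult_left_mono ln_le_minus_one) auto
  also have "real p * (real r - 1) \<le> real r ^ p - 1"
    using Bernoulli_inequality[of "real r - 1" p] r by simp
  finally show ?thesis using m by (simp add: algebra_simps mult_left_mono)
qed

lemma expected_max_iterations_le:
  assumes ms: "mca_structure n m p q vars"
    and hb: "\<forall>(i, v) \<in> value_index m r vars. bounded_density \<phi> (f i v)"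
    and r: "1 \<le> r" and m: "1 \<le> m"
  shows "(\<lambda>om. real (max_iterations n r m vars om)) \<in> borel_measurable (value_space m r vars f)"
    and "(\<integral>\<^sup>+ om. ennreal (real (max_iterations n r m vars om)) \<partial>value_space m r vars f)
      \<le> ennreal (real r ^ (2 * p * (q + 1) + 2) * real n * real m ^ 2 * \<phi>)"
proof -
  let ?P = "value_space m r vars f"
  let ?N = "r ^ (p * m)"
  let ?K = "card (gain_keys n m r vars)"
  show "(\<lambda>om. real (max_iterations n r m vars om)) \<in> borel_measurable ?P"
    by (rule nn_integral_nat_eq_sum_tails(1)) (use max_iterations_le[OF ms r] sets_le_max_iterations[OF ms r] in auto)
  have layer_cake: "(\<integral>\<^sup>+ om. ennreal (real (max_iterations n r m vars om)) \<partial>?P)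
      = (\<Sum>t=1..?N. emeasure ?P {om \<in> space ?P. t \<le> max_iterations n r m vars om})"
    by (rule nn_integral_nat_eq_sum_tails(2)) (use max_iterations_le[OF ms r] sets_le_max_iterations[OF ms r] in auto)
  have "(0, replicate (length (vars 0)) 0) \<in> value_index m r vars"
    using m r unfolding value_index_def by auto
  then have \<phi>: "0 \<le> \<phi>" using hb bounded_density_nonneg by auto
  have "(\<integral>\<^sup>+ om. ennreal (real (max_iterations n r m vars om)) \<partial>?P)
      \<le> (\<Sum>t=1..?N. ennreal (?K * (m / t * \<phi>)))"
    unfolding layer_cake by (intro sum_mono emeasure_le_max_iterations_le[OF ms hb r _ \<phi>]) simp
  also have "\<dots> = ennreal (?K * m * \<phi> * harm ?N)"
    using \<phi> by (simp add: sum_ennreal harm_def sum_distrib_left divide_inverse mult_ac)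
  also have "?K * m * \<phi> * harm ?N \<le> (n * r ^ (p * q + 1)) * m * \<phi> * (m * r ^ p)"
    using card_gain_keys_le[OF ms r] harm_power_le[OF r m] \<phi>
    by (intro mult_mono) (auto simp flip: of_nat_mult of_nat_power intro: harm_nonneg)
  also have "\<dots> = real r ^ (p * (q + 1) + 1) * real n * real m ^ 2 * \<phi>"
    by (simp add: power_add power2_eq_square algebra_simps)
  also have "\<dots> \<le> real r ^ (2 * p * (q + 1) + 2) * real n * real m ^ 2 * \<phi>"
    using r \<phi> by (intro mult_right_mono power_increasing) auto
  finally show "(\<integral>\<^sup>+ om. ennreal (real (max_iterations n r m vars om)) \<partial>?P)
      \<le> ennreal (real r ^ (2 * p * (q + 1) + 2) * real n * real m ^ 2 * \<phi>)"
    by (simp add: ennreal_leI)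
qed

theorem mainTheorem19:
  shows "\<exists>c::real. \<forall>(n::nat) (m::nat) (p::nat) (q::nat) (r::nat) (\<phi>::real)
            (vars :: nat \<Rightarrow> nat list) (f :: nat \<Rightarrow> nat list \<Rightarrow> real \<Rightarrow> real).
     mca_structure n m p q vars \<and>
     (\<forall>(i, v) \<in> value_index m r vars. bounded_density \<phi> (f i v)) \<longrightarrow>
       (\<lambda>om. real (max_iterations n r m vars om)) \<in> borel_measurable (value_space m r vars f) \<and>
       (\<integral>\<^sup>+ om. ennreal (real (max_iterations n r m vars om)) \<partial>value_space m r vars f)
         \<le> ennreal (c * real r ^ (2 * p * (q + 1) + 2) * real n * real m ^ 2 * \<phi>)"
proof (intro exI[of _ 1] allI impI, elim conjE)
  fix n m p q r :: nat and \<phi> :: real and vars f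
  assume ms: "mca_structure n m p q vars"
    and hb: "\<forall>(i, v) \<in> value_index m r vars. bounded_density \<phi> (f i v)"
  show "(\<lambda>om. real (max_iterations n r m vars om)) \<in> borel_measurable (value_space m r vars f) \<and>
       (\<integral>\<^sup>+ om. ennreal (real (max_iterations n r m vars om)) \<partial>value_space m r vars f)
         \<le> ennreal (1 * real r ^ (2 * p * (q + 1) + 2) * real n * real m ^ 2 * \<phi>)"
  proof (cases "m = 0 \<or> r = 0")
    case True
    then show ?thesis by (simp add: max_iterations_degenerate)
  next
    case False
    then show ?thesis using expected_max_iterations_le[OF ms hb] by simp
  qed
qed

end
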